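(* Let $(X,\mathcal{A},\mu)$ be a $q$-measure space. Let $f_i\ge0$ be an increasing sequence of measurable functions on $X$ converging pointwise to $f$, and suppose there is a $\mu$-integrable function $g$ that $\mu$-dominates $f_i$ for every $i$. Then $f$ is $\mu$-integrable and $\lim_{i\to\infty}\int f_i\,d\mu=\int f\,d\mu$.
   Context: A $q$-measure space is a triple $(X,\mathcal{A},\mu)$ where $\mathcal{A}$ is a $\sigma$-algebra of subsets of $X$ and $\mu\colon\mathcal{A}\to[0,\infty)$ satisfies: (i) grade-2 additivity: $\mu(A\cup B\cup C)=\mu(A\cup B)+\mu(A\cup C)+\mu(B\cup C)-\mu(A)-\mu(B)-\mu(C)$ for mutually disjoint $A,B,C\in\mathcal{A}$; (ii) if $A_i\in\mathcal{A}$ is increasing then $\mu(\bigcup A_i)=\lim\mu(A_i)$; (iii) if $A_i\in\mathcal{A}$ is decreasing then $\mu(\bigcap A_i)=\lim\mu(A_i)$. For measurable $f$, $f$ is $\mu$-integrable if $\lambda\mapsto\mu(f^{-1}(\lambda,\infty))$ and $\lambda\mapsto\mu(f^{-1}(-\infty,-\lambda))$ have finite Lebesgue integral over $[0,\infty)$, and then $\int f\,d\mu=\int_0^\infty\mu(f^{-1}(\lambda,\infty))\,d\lambda-\int_0^\infty\mu(f^{-1}(-\infty,-\lambda))\,d\lambda$. For measurable $f,g$, $g$ $\mu$-dominates $f$ if $\mu(f^{-1}(\lambda,\infty))\le\mu(g^{-1}(\lambda,\infty))$ for all $\lambda\in\mathbb{R}$. *)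

theory Defs
  imports "HOL-Analysis.Analysis"
begin

definition q_measure_space :: "'a set \<Rightarrow> 'a set set \<Rightarrow> ('a set \<Rightarrow> real) \<Rightarrow> bool" where
  "q_measure_space X A \<mu> \<longleftrightarrow>
     sigma_algebra X A \<and>
     (\<forall>S\<in>A. 0 \<le> \<mu> S) \<and>
     (\<forall>B\<in>A. \<forall>C\<in>A. \<forall>D\<in>A. B \<inter> C = {} \<and> B \<inter> D = {} \<and> C \<inter> D = {} \<longrightarrow>
        \<mu> (B \<union> C \<union> D) = \<mu> (B \<union> C) + \<mu> (B \<union> D) + \<mu> (C \<union> D) - \<mu> B - \<mu> C - \<mu> D) \<and>
     (\<forall>S :: nat \<Rightarrow> 'a set. range S \<subseteq> A \<and> incseq S \<longrightarrow> (\<lambda>i. \<mu> (S i)) \<longlonglongrightarrow> \<mu> (\<Union>i. S i)) \<and>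
     (\<forall>S :: nat \<Rightarrow> 'a set. range S \<subseteq> A \<and> decseq S \<longrightarrow> (\<lambda>i. \<mu> (S i)) \<longlonglongrightarrow> \<mu> (\<Inter>i. S i))"

definition q_measurable :: "'a set \<Rightarrow> 'a set set \<Rightarrow> ('a \<Rightarrow> real) \<Rightarrow> bool" where
  "q_measurable X A f \<longleftrightarrow> f \<in> borel_measurable (sigma X A)"

definition q_integrable :: "'a set \<Rightarrow> 'a set set \<Rightarrow> ('a set \<Rightarrow> real) \<Rightarrow> ('a \<Rightarrow> real) \<Rightarrow> bool" where
  "q_integrable X A \<mu> f \<longleftrightarrow> q_measurable X A f \<and>
     set_integrable lborel {0..} (\<lambda>t. \<mu> {x\<in>X. f x > t}) \<and>
     set_integrable lborel {0..} (\<lambda>t. \<mu> {x\<in>X. f x < - t})"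

definition q_integral :: "'a set \<Rightarrow> ('a set \<Rightarrow> real) \<Rightarrow> ('a \<Rightarrow> real) \<Rightarrow> real" where
  "q_integral X \<mu> f =
     (LINT t:{0..}|lborel. \<mu> {x\<in>X. f x > t}) - (LINT t:{0..}|lborel. \<mu> {x\<in>X. f x < - t})"

definition q_dominates :: "'a set \<Rightarrow> ('a set \<Rightarrow> real) \<Rightarrow> ('a \<Rightarrow> real) \<Rightarrow> ('a \<Rightarrow> real) \<Rightarrow> bool" where
  "q_dominates X \<mu> g f \<longleftrightarrow> (\<forall>t::real. \<mu> {x\<in>X. f x > t} \<le> \<mu> {x\<in>X. g x > t})"

end

theory Submission
  imports Defs
begin

(*
  For a nonnegative function h the lower tail t \<mapsto> \<mu>{h < -t} vanishes on [0,\<infinity>), so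
  the q-integral of h is the ordinary Lebesgue integral of its upper tail
  t \<mapsto> \<mu>{h > t} over [0,\<infinity>).  The theorem therefore reduces to Lebesgue's dominated
  convergence theorem for the upper tails of the f_i, dominated by the (integrable)
  upper tail of g.  Two facts about upper tails are needed:
    - if f_i increases pointwise to f, the level sets {f_i > t} increase to {f > t},
      so continuity from below of \<mu> gives pointwise convergence of the tails;
    - the tail t \<mapsto> \<mu>{h > t} is Borel measurable.  A q-measure need not be monotone,
      so this tail need not be monotone; instead it is right-continuous (again by
      continuity from below), and right-continuous real functions are Borel.
  The file first collects basic facts on q-measure spaces, then the facts about upper
  tails, the reduction of q-integrals of nonnegative functions, a set-integral form of
  dominated convergence, and finally the theorem.
*)

lemma q_measure_space_sigma_algebra: "q_measure_space X A \<mu> \<Longrightarrow> sigma_algebra X A"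
  unfolding q_measure_space_def by blast

lemma q_measure_nonneg: "q_measure_space X A \<mu> \<Longrightarrow> S \<in> A \<Longrightarrow> 0 \<le> \<mu> S"
  unfolding q_measure_space_def by blast

(* Grade-2 additivity applied to three copies of the empty set forces \<mu> {} = 0. *)
lemma q_measure_empty:
  assumes "q_measure_space X A \<mu>"
  shows "\<mu> {} = 0"
proof -
  have "{} \<in> A"
    using q_measure_space_sigma_algebra[OF assms] by (simp add: sigma_algebra_iff2)
  then have "\<mu> ({} \<union> {} \<union> {}) = \<mu> ({} \<union> {}) + \<mu> ({} \<union> {}) + \<mu> ({} \<union> {}) - \<mu> {} - \<mu> {} - \<mu> {}"
    using assms unfolding q_measure_space_def by blast
  then show ?thesis by simp
qed

lemma q_measure_incseq_Union:
  assumes "q_measure_space X A \<mu>" "range S \<subseteq> A" "incseq S"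
  shows "(\<lambda>i. \<mu> (S i)) \<longlonglongrightarrow> \<mu> (\<Union>i. S i)"
  using assms unfolding q_measure_space_def by blast

lemma upper_level_set_in:
  assumes "sigma_algebra X A" "q_measurable X A h"
  shows "{x\<in>X. t < h x} \<in> A"
proof -
  have "{x \<in> space (sigma X A). t < h x} \<in> sets (sigma X A)"
    using assms(2) unfolding q_measurable_def borel_measurable_iff_greater by blast
  then show ?thesis
    using sigma_algebra.space_measure_of_eq[OF assms(1)] sigma_algebra.sets_measure_of_eq[OF assms(1)]
    by simp
qed

lemma q_measurable_LIMSEQ:
  assumes "sigma_algebra X A" "\<And>i. q_measurable X A (fs i)"
    and "\<And>x. x \<in> X \<Longrightarrow> (\<lambda>i. fs i x) \<longlonglongrightarrow> f x"
  shows "q_measurable X A f"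
  unfolding q_measurable_def
proof (rule borel_measurable_LIMSEQ_real[where u = fs])
  show "(\<lambda>i. fs i x) \<longlonglongrightarrow> f x" if "x \<in> space (sigma X A)" for x
    using assms(3) that sigma_algebra.space_measure_of_eq[OF assms(1)] by simp
qed (use assms(2) q_measurable_def in blast)

(* Approaching t from above, the level sets {h > s} increase to {h > t}; hence
   the upper tail of a measurable function is right-continuous. *)
lemma upper_tail_right_continuous:
  assumes qms: "q_measure_space X A \<mu>" and h: "q_measurable X A h"
  shows "continuous (at_right t) (\<lambda>s. \<mu> {x\<in>X. s < h x})"
  unfolding continuous_within
proof (rule tendsto_at_right_sequentially[of t "t + 1"])
  fix s :: "nat \<Rightarrow> real"
  assume above: "\<And>n. t < s n" and "decseq s" and lim: "s \<longlonglongrightarrow> t"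
  let ?S = "\<lambda>n. {x\<in>X. s n < h x}"
  have sets: "range ?S \<subseteq> A"
    using upper_level_set_in[OF q_measure_space_sigma_algebra[OF qms] h] by blast
  have mono: "incseq ?S"
    using \<open>decseq s\<close> unfolding incseq_def decseq_def by (auto intro: le_less_trans)
  have union: "(\<Union>n. ?S n) = {x\<in>X. t < h x}"
  proof safe
    fix x n assume "s n < h x" then show "t < h x" using above[of n] by linarith
  next
    fix x assume "x \<in> X" "t < h x"
    then obtain n where "s n < h x"
      using order_tendstoD(2)[OF lim] by (auto simp: eventually_sequentially)
    then show "x \<in> (\<Union>n. ?S n)" using \<open>x \<in> X\<close> by blast
  qed
  show "(\<lambda>n. \<mu> (?S n)) \<longlonglongrightarrow> \<mu> {x\<in>X. t < h x}"
    using q_measure_incseq_Union[OF qms sets mono] unfolding union .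
qed simp

(* A right-continuous real function is the pointwise limit of the functions
   t \<mapsto> \<phi>((\<lfloor>2^n t\<rfloor> + 1) / 2^n), each of which factors through a countable set. *)
lemma right_continuous_borel_measurable:
  fixes \<phi> :: "real \<Rightarrow> real"
  assumes right_cont: "\<And>t. continuous (at_right t) \<phi>"
  shows "\<phi> \<in> borel_measurable borel"
proof -
  define d :: "nat \<Rightarrow> real \<Rightarrow> real" where "d n t = (real_of_int \<lfloor>t * 2^n\<rfloor> + 1) / 2^n" for n t
  have "(\<lambda>t. \<phi> (d n t)) \<in> borel_measurable borel" for n
  proof -
    have "(\<lambda>t::real. \<lfloor>t * 2^n\<rfloor>) \<in> borel \<rightarrow>\<^sub>M count_space UNIV" by measurable
    then show ?thesis
      using measurable_compose_countable[where f = "\<lambda>k t. \<phi> ((real_of_int k + 1) / 2^n)"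
          and g = "\<lambda>t::real. \<lfloor>t * 2^n\<rfloor>" and N = borel]
      unfolding d_def by simp
  qed
  moreover have "(\<lambda>n. \<phi> (d n t)) \<longlonglongrightarrow> \<phi> t" for t
  proof -
    have above: "t < d n t" for n
      unfolding d_def by (simp add: field_simps) linarith
    have below: "d n t \<le> t + (1/2)^n" for n
    proof -
      have "real_of_int \<lfloor>t * 2^n\<rfloor> \<le> t * 2^n" by linarith
      then show ?thesis unfolding d_def by (simp add: field_simps power_divide)
    qed
    have "(\<lambda>n. d n t) \<longlonglongrightarrow> t"
    proof (rule tendsto_sandwich[of "\<lambda>_. t" _ _ "\<lambda>n. t + (1/2)^n"])
      have "(\<lambda>n. t + (1/2::real)^n) \<longlonglongrightarrow> t + 0"
        by (intro tendsto_add tendsto_const LIMSEQ_power_zero) simp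
      then show "(\<lambda>n. t + (1/2::real)^n) \<longlonglongrightarrow> t" by simp
      show "\<forall>\<^sub>F n in sequentially. t \<le> d n t"
        using above by (simp add: less_imp_le)
      show "\<forall>\<^sub>F n in sequentially. d n t \<le> t + (1/2)^n"
        using below by simp
    qed simp
    then have "filterlim (\<lambda>n. d n t) (at_right t) sequentially"
      using above by (intro tendsto_imp_filterlim_at_right) auto
    then show ?thesis
      using right_cont[of t] unfolding continuous_within by (rule filterlim_compose[rotated])
  qed
  ultimately show ?thesis
    by (rule borel_measurable_LIMSEQ_real[rotated])
qed

lemma upper_tail_measurable:
  assumes "q_measure_space X A \<mu>" "q_measurable X A h"
  shows "set_borel_measurable lborel {0..} (\<lambda>t. \<mu> {x\<in>X. t < h x})"
proof -
  have "(\<lambda>t. \<mu> {x\<in>X. t < h x}) \<in> borel_measurable lborel"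
    using right_continuous_borel_measurable[OF upper_tail_right_continuous[OF assms]] by simp
  then show ?thesis unfolding set_borel_measurable_def by measurable
qed

lemma upper_tail_dominated:
  assumes "q_measure_space X A \<mu>" "q_measurable X A h" "q_dominates X \<mu> g h"
  shows "\<bar>\<mu> {x\<in>X. t < h x}\<bar> \<le> \<mu> {x\<in>X. t < g x}"
proof -
  have "{x\<in>X. t < h x} \<in> A"
    using upper_level_set_in[OF q_measure_space_sigma_algebra[OF assms(1)] assms(2)] .
  then have "0 \<le> \<mu> {x\<in>X. t < h x}"
    using q_measure_nonneg[OF assms(1)] by blast
  then show ?thesis using assms(3) unfolding q_dominates_def by simp
qed

lemma upper_tail_incseq_limit:
  assumes qms: "q_measure_space X A \<mu>" and meas: "\<And>i. q_measurable X A (fs i)"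
    and mono: "\<And>x. x \<in> X \<Longrightarrow> incseq (\<lambda>i. fs i x)"
    and lim: "\<And>x. x \<in> X \<Longrightarrow> (\<lambda>i. fs i x) \<longlonglongrightarrow> f x"
  shows "(\<lambda>i. \<mu> {x\<in>X. t < fs i x}) \<longlonglongrightarrow> \<mu> {x\<in>X. t < f x}"
proof -
  let ?S = "\<lambda>i. {x\<in>X. t < fs i x}"
  have sets: "range ?S \<subseteq> A"
    using upper_level_set_in[OF q_measure_space_sigma_algebra[OF qms] meas] by blast
  have incr: "incseq ?S"
    using mono unfolding incseq_def by (auto intro: less_le_trans)
  have union: "(\<Union>i. ?S i) = {x\<in>X. t < f x}"
  proof safe
    fix x i assume "x \<in> X" "t < fs i x"
    then show "t < f x" using incseq_le[OF mono lim, of x i] by linarith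
  next
    fix x assume "x \<in> X" "t < f x"
    then obtain i where "t < fs i x"
      using order_tendstoD(1)[OF lim[OF \<open>x \<in> X\<close>] \<open>t < f x\<close>]
      by (auto simp: eventually_sequentially)
    then show "x \<in> (\<Union>i. ?S i)" using \<open>x \<in> X\<close> by blast
  qed
  show ?thesis
    using q_measure_incseq_Union[OF qms sets incr] unfolding union .
qed

lemma lower_tail_nonneg:
  fixes h :: "'a \<Rightarrow> real"
  assumes "q_measure_space X A \<mu>" "\<And>x. x \<in> X \<Longrightarrow> 0 \<le> h x" "0 \<le> t"
  shows "\<mu> {x\<in>X. h x < - t} = 0"
proof -
  have "- t \<le> h x" if "x \<in> X" for x using assms(2)[OF that] assms(3) by linarith
  then have "{x\<in>X. h x < - t} = {}" by (auto simp: not_less[symmetric])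
  then show ?thesis using q_measure_empty[OF assms(1)] by (simp only:)
qed

lemma lower_tail_indicator_nonneg:
  fixes h :: "'a \<Rightarrow> real"
  assumes "q_measure_space X A \<mu>" "\<And>x. x \<in> X \<Longrightarrow> 0 \<le> h x"
  shows "(\<lambda>t::real. indicator {0..} t *\<^sub>R \<mu> {x\<in>X. h x < - t}) = (\<lambda>t. 0)"
proof
  show "indicator {0..} t *\<^sub>R \<mu> {x\<in>X. h x < - t} = 0" for t :: real
    using lower_tail_nonneg[OF assms(1), of h t] assms(2) by (cases "0 \<le> t") auto
qed

lemma q_integrable_nonneg_iff:
  assumes "q_measure_space X A \<mu>" "\<And>x. x \<in> X \<Longrightarrow> 0 \<le> h x"
  shows "q_integrable X A \<mu> h \<longleftrightarrow>
    q_measurable X A h \<and> set_integrable lborel {0..} (\<lambda>t. \<mu> {x\<in>X. t < h x})"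
  using lower_tail_indicator_nonneg[where h = h and X = X, OF assms]
  unfolding q_integrable_def set_integrable_def by simp

lemma q_integral_nonneg_eq:
  assumes "q_measure_space X A \<mu>" "\<And>x. x \<in> X \<Longrightarrow> 0 \<le> h x"
  shows "q_integral X \<mu> h = (LINT t:{0..}|lborel. \<mu> {x\<in>X. t < h x})"
  using lower_tail_indicator_nonneg[where h = h and X = X, OF assms]
  unfolding q_integral_def set_lebesgue_integral_def by simp

lemma set_integral_dominated_convergence:
  fixes F :: "nat \<Rightarrow> 'a \<Rightarrow> real"
  assumes "set_borel_measurable M S G" "\<And>i. set_borel_measurable M S (F i)"
    and "set_integrable M S w"
    and "AE x in M. x \<in> S \<longrightarrow> (\<lambda>i. F i x) \<longlonglongrightarrow> G x"
    and "\<And>i. AE x in M. x \<in> S \<longrightarrow> \<bar>F i x\<bar> \<le> w x"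
  shows "set_integrable M S G \<and>
    (\<lambda>i. set_lebesgue_integral M S (F i)) \<longlonglongrightarrow> set_lebesgue_integral M S G"
proof -
  let ?G = "\<lambda>x. indicator S x *\<^sub>R G x" and ?F = "\<lambda>i x. indicator S x *\<^sub>R F i x"
    and ?w = "\<lambda>x. indicator S x *\<^sub>R w x"
  have hyps: "?G \<in> borel_measurable M" "\<And>i. ?F i \<in> borel_measurable M" "integrable M ?w"
    using assms(1-3) unfolding set_borel_measurable_def set_integrable_def by auto
  have lim: "AE x in M. (\<lambda>i. ?F i x) \<longlonglongrightarrow> ?G x"
    using assms(4) by eventually_elim (auto simp: indicator_def)
  have bound: "\<And>i. AE x in M. norm (?F i x) \<le> ?w x"
    using assms(5) by (rule eventually_mono) (auto simp: indicator_def)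
  show ?thesis
    unfolding set_integrable_def set_lebesgue_integral_def
    using integrable_dominated_convergence[OF hyps lim bound]
      integral_dominated_convergence[OF hyps lim bound]
    by blast
qed

theorem theorem5p2:
  fixes X :: "'a set" and A :: "'a set set" and \<mu> :: "'a set \<Rightarrow> real"
    and fs :: "nat \<Rightarrow> 'a \<Rightarrow> real" and f g :: "'a \<Rightarrow> real"
  assumes "q_measure_space X A \<mu>"
    and "\<And>i. q_measurable X A (fs i)"
    and "\<And>i x. x \<in> X \<Longrightarrow> 0 \<le> fs i x"
    and "\<And>x. x \<in> X \<Longrightarrow> incseq (\<lambda>i. fs i x)"
    and "\<And>x. x \<in> X \<Longrightarrow> (\<lambda>i. fs i x) \<longlonglongrightarrow> f x"
    and "q_integrable X A \<mu> g"
    and "\<And>i. q_dominates X \<mu> g (fs i)"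
  shows "q_integrable X A \<mu> f \<and> (\<lambda>i. q_integral X \<mu> (fs i)) \<longlonglongrightarrow> q_integral X \<mu> f"
proof -
  note qms = assms(1)
  have f_meas: "q_measurable X A f"
    using q_measurable_LIMSEQ[OF q_measure_space_sigma_algebra[OF qms] assms(2,5)] .
  have f_nonneg: "0 \<le> f x" if "x \<in> X" for x
    using incseq_le[OF assms(4,5)[OF that], of 0] assms(3)[OF that, of 0] by linarith
  have "set_integrable lborel {0..} (\<lambda>t. \<mu> {x\<in>X. t < f x}) \<and>
    (\<lambda>i. LINT t:{0..}|lborel. \<mu> {x\<in>X. t < fs i x}) \<longlonglongrightarrow> (LINT t:{0..}|lborel. \<mu> {x\<in>X. t < f x})"
  proof (rule set_integral_dominated_convergence)
    show "set_integrable lborel {0..} (\<lambda>t. \<mu> {x\<in>X. t < g x})"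
      using assms(6) unfolding q_integrable_def by blast
    show "AE t in lborel. t \<in> {0..} \<longrightarrow> (\<lambda>i. \<mu> {x\<in>X. t < fs i x}) \<longlonglongrightarrow> \<mu> {x\<in>X. t < f x}"
      using upper_tail_incseq_limit[OF qms assms(2,4,5)] by simp
    show "AE t in lborel. t \<in> {0..} \<longrightarrow> \<bar>\<mu> {x\<in>X. t < fs i x}\<bar> \<le> \<mu> {x\<in>X. t < g x}" for i
      using upper_tail_dominated[OF qms assms(2,7)] by simp
  qed (use upper_tail_measurable[OF qms] f_meas assms(2) in auto)
  then show ?thesis
    using q_integrable_nonneg_iff[where h = f, OF qms f_nonneg] f_meas
      q_integral_nonneg_eq[where h = f, OF qms f_nonneg]
      q_integral_nonneg_eq[where h = "fs i" for i, OF qms assms(3)]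
    by simp
qed

end
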